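(* Let $\varepsilon,\delta>0$ and $s\ge1$ an integer. For $i\in[1:s]$ let $\rho^{(i)}\in\mathcal{D}(\mathcal{H})$ be a quantum state and $\Pi^{(i)}$ a projection operator on $\mathcal{H}$ such that $\mathrm{Tr}[\Pi^{(i)}\rho^{(i)}]\ge1-\varepsilon$. Then there exists a projection operator $\Pi^\star$ such that for all $i\in[1:s]$, $$\mathrm{Tr}[\Pi^\star\rho^{(i)}]\ge 1-\varepsilon-\delta\log(2s),$$ and $$\Pi^\star\preceq\left(\frac{2}{\delta^2}\right)^{\log(2s)}\left(\Pi^{(1)}+\Pi^{(2)}+\dots+\Pi^{(s)}\right).$$
   Context: $\mathcal{H}$ is a finite-dimensional Hilbert space, $\mathcal{D}(\mathcal{H})$ its set of density operators; $\log$ is base 2; $[1:s]=\{1,\dots,s\}$; $P\preceq Q$ means $Q-P$ is positive semi-definite. *)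

theory Defs
  imports Complex_Main "Jordan_Normal_Form.Matrix"
begin

text \<open>Operators on the finite-dimensional Hilbert space H = C^n are complex n x n matrices.\<close>

definition cadjoint :: "complex mat \<Rightarrow> complex mat" where
  "cadjoint A = mat (dim_col A) (dim_row A) (\<lambda>(i,j). cnj (A $$ (j,i)))"

definition ctrace :: "complex mat \<Rightarrow> complex" where
  "ctrace A = (\<Sum>i<dim_row A. A $$ (i,i))"

definition cinner :: "complex vec \<Rightarrow> complex vec \<Rightarrow> complex" where
  "cinner v w = (\<Sum>i<dim_vec w. cnj (v $ i) * w $ i)"

definition psd :: "nat \<Rightarrow> complex mat \<Rightarrow> bool" where
  "psd n A \<longleftrightarrow> A \<in> carrier_mat n n \<and> cadjoint A = A \<and>
     (\<forall>v \<in> carrier_vec n. 0 \<le> Re (cinner v (A *\<^sub>v v)))"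

definition loewner_le :: "nat \<Rightarrow> complex mat \<Rightarrow> complex mat \<Rightarrow> bool" where
  "loewner_le n P Q \<longleftrightarrow> P \<in> carrier_mat n n \<and> Q \<in> carrier_mat n n \<and> psd n (Q - P)"

definition density_op :: "nat \<Rightarrow> complex mat \<Rightarrow> bool" where
  "density_op n \<rho> \<longleftrightarrow> psd n \<rho> \<and> ctrace \<rho> = 1"

definition projection :: "nat \<Rightarrow> complex mat \<Rightarrow> bool" where
  "projection n P \<longleftrightarrow> P \<in> carrier_mat n n \<and> cadjoint P = P \<and> P * P = P"

definition msum :: "nat \<Rightarrow> (nat \<Rightarrow> complex mat) \<Rightarrow> nat set \<Rightarrow> complex mat" where
  "msum n F I = mat n n (\<lambda>(i,j). \<Sum>k\<in>I. F k $$ (i,j))"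

end

theory Submission
  imports Defs "Jordan_Normal_Form.Spectral_Radius"
begin

(* Diagonalise A = Proj_1 + ... + Proj_s and let P project onto the eigenvectors of A with
   eigenvalue at least t, so that P <= A / t. For a unit vector phi, the weight 1 - <phi, P phi>
   lost by P is the low-eigenvalue part of phi; splitting phi = Proj_i phi + (phi - Proj_i phi),
   the low-eigenvalue part of Proj_i phi has squared norm at most t because Proj_i <= A, and
   phi - Proj_i phi has squared norm 1 - <phi, Proj_i phi>. Averaging over an eigenbasis of rho_i
   gives Tr[P rho_i] >= 1 - (1 + a) t - (1 + 1/a) eps for every a > 0, and t = (delta^2/2)^log(2s),
   a = 1/delta bring the loss below eps + delta log(2s). When s = 1 the projection Proj_1 itself
   works, and when the bound is vacuous the zero projection does. *)

definition hermitian :: "nat \<Rightarrow> complex mat \<Rightarrow> bool" where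
  "hermitian n A \<longleftrightarrow> A \<in> carrier_mat n n \<and> cadjoint A = A"

lemma cadjoint_dims [simp]: "dim_row (cadjoint A) = dim_col A" "dim_col (cadjoint A) = dim_row A"
  by (simp_all add: cadjoint_def)

lemma cadjoint_index [simp]:
  "i < dim_col A \<Longrightarrow> j < dim_row A \<Longrightarrow> cadjoint A $$ (i,j) = cnj (A $$ (j,i))"
  by (simp add: cadjoint_def)

lemma cadjoint_carrier: "A \<in> carrier_mat nr nc \<Longrightarrow> cadjoint A \<in> carrier_mat nc nr"
  by (intro carrier_matI) (auto dest: carrier_matD)

lemma cadjoint_cadjoint [simp]: "cadjoint (cadjoint A) = A"
  by (rule eq_matI) auto

lemma cadjoint_mult:
  assumes "A \<in> carrier_mat nr n" "B \<in> carrier_mat n nc"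
  shows "cadjoint (A * B) = cadjoint B * cadjoint A"
  using assms by (intro eq_matI) (auto simp: scalar_prod_def cnj_sum mult.commute intro!: sum.cong)

lemma cadjoint_one [simp]: "cadjoint (1\<^sub>m n) = 1\<^sub>m n"
  by (rule eq_matI) auto

lemma cadjoint_minus:
  assumes "A \<in> carrier_mat nr nc" "B \<in> carrier_mat nr nc"
  shows "cadjoint (A - B) = cadjoint A - cadjoint B"
  using assms by (intro eq_matI) auto

lemma cadjoint_smult_real: "cadjoint (complex_of_real r \<cdot>\<^sub>m A) = complex_of_real r \<cdot>\<^sub>m cadjoint A"
  by (intro eq_matI) auto

lemma cinner_mult_mat_vec:
  assumes "A \<in> carrier_mat nr nc" "v \<in> carrier_vec nr" "w \<in> carrier_vec nc"
  shows "cinner v (A *\<^sub>v w) = cinner (cadjoint A *\<^sub>v v) w"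
proof -
  have "cinner v (A *\<^sub>v w) = (\<Sum>i<nr. \<Sum>j<nc. cnj (v $ i) * (A $$ (i,j) * w $ j))"
    using assms by (simp add: cinner_def scalar_prod_def sum_distrib_left atLeast0LessThan)
  also have "\<dots> = (\<Sum>j<nc. \<Sum>i<nr. cnj (v $ i) * (A $$ (i,j) * w $ j))"
    by (rule sum.swap)
  also have "\<dots> = cinner (cadjoint A *\<^sub>v v) w"
    using assms
    by (simp add: cinner_def scalar_prod_def sum_distrib_left atLeast0LessThan
        mult.commute mult.left_commute)
  finally show ?thesis .
qed

lemma cinner_hermitian:
  assumes "hermitian n M" "x \<in> carrier_vec n" "y \<in> carrier_vec n"
  shows "cinner (M *\<^sub>v x) y = cinner x (M *\<^sub>v y)"
  using assms cinner_mult_mat_vec[of M n n x y] by (simp add: hermitian_def)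

lemma cinner_commute: "dim_vec v = dim_vec w \<Longrightarrow> cinner w v = cnj (cinner v w)"
  by (simp add: cinner_def mult.commute)

lemma cinner_self_real: "Im (cinner v v) = 0" "Re (cinner v v) \<ge> 0"
  by (simp_all add: cinner_def Re_sum Im_sum sum_nonneg)

lemma cinner_self_eq_Re: "cinner v v = complex_of_real (Re (cinner v v))"
  using cinner_self_real(1)[of v] by (simp add: complex_eq_iff)

lemma cinner_self_eq_0_iff: "cinner v v = 0 \<longleftrightarrow> v = 0\<^sub>v (dim_vec v)"
proof
  assume v0: "cinner v v = 0"
  have "(\<Sum>i<dim_vec v. (Re (v $ i))\<^sup>2 + (Im (v $ i))\<^sup>2) = Re (cinner v v)"
    by (simp add: cinner_def Re_sum power2_eq_square)
  with v0 have "\<forall>i\<in>{..<dim_vec v}. (Re (v $ i))\<^sup>2 + (Im (v $ i))\<^sup>2 = 0"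
    by (subst sum_nonneg_eq_0_iff[symmetric]) auto
  then have "\<forall>i<dim_vec v. Re (v $ i) = 0 \<and> Im (v $ i) = 0"
    by (simp only: sum_power2_eq_zero_iff) simp
  then show "v = 0\<^sub>v (dim_vec v)"
    by (intro eq_vecI) (auto simp: complex_eq_iff)
next
  assume "v = 0\<^sub>v (dim_vec v)"
  then have "\<forall>i<dim_vec v. v $ i = 0" by (metis index_zero_vec(1))
  then show "cinner v v = 0" by (simp add: cinner_def)
qed

lemma cinner_minus_right: "dim_vec w = dim_vec u \<Longrightarrow> cinner v (w - u) = cinner v w - cinner v u"
  by (simp add: cinner_def right_diff_distrib sum_subtractf)

lemma cinner_minus_left:
  "dim_vec v = dim_vec u \<Longrightarrow> dim_vec w = dim_vec v \<Longrightarrow> cinner (v - u) w = cinner v w - cinner u w"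
  by (simp add: cinner_def left_diff_distrib sum_subtractf)

lemma cinner_smult_right: "cinner v (c \<cdot>\<^sub>v w) = c * cinner v w"
  by (simp add: cinner_def sum_distrib_left mult.left_commute)

lemma cinner_smult_left: "dim_vec w = dim_vec v \<Longrightarrow> cinner (c \<cdot>\<^sub>v v) w = cnj c * cinner v w"
  by (simp add: cinner_def sum_distrib_left mult.assoc)

lemma cinner_eq_scalar_prod_c:
  "x \<in> carrier_vec n \<Longrightarrow> y \<in> carrier_vec n \<Longrightarrow> cinner y x = x \<bullet>c y"
  by (simp add: scalar_prod_def cinner_def atLeast0LessThan mult.commute)

lemma cadjoint_mult_index:
  assumes "W \<in> carrier_mat k n" "M \<in> carrier_mat k m" "i < n" "j < m"
  shows "(cadjoint W * M) $$ (i,j) = cinner (col W i) (col M j)"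
  using assms by (simp add: scalar_prod_def cinner_def atLeast0LessThan)

lemma ctrace_mult_commute:
  assumes "A \<in> carrier_mat n m" "B \<in> carrier_mat m n"
  shows "ctrace (A * B) = ctrace (B * A)"
proof -
  have "ctrace (A * B) = (\<Sum>i<n. \<Sum>j<m. A $$ (i,j) * B $$ (j,i))"
    using assms by (simp add: ctrace_def scalar_prod_def atLeast0LessThan)
  also have "\<dots> = (\<Sum>j<m. \<Sum>i<n. B $$ (j,i) * A $$ (i,j))"
    by (subst sum.swap) (simp add: mult.commute)
  also have "\<dots> = ctrace (B * A)"
    using assms by (simp add: ctrace_def scalar_prod_def atLeast0LessThan)
  finally show ?thesis .
qed

lemma hermitian_cadjoint_conj:
  assumes "hermitian n A" "W \<in> carrier_mat n m"
  shows "hermitian m (cadjoint W * A * W)"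
proof -
  have A: "A \<in> carrier_mat n n" and hA: "cadjoint A = A" using assms(1) by (auto simp: hermitian_def)
  have cW: "cadjoint W \<in> carrier_mat m n" using cadjoint_carrier[OF assms(2)] .
  have "cadjoint (cadjoint W * A * W) = cadjoint W * cadjoint (cadjoint W * A)"
    using cadjoint_mult[of "cadjoint W * A" m n W m] cW A assms(2) by simp
  also have "cadjoint (cadjoint W * A) = cadjoint A * W"
    using cadjoint_mult[OF cW A] by simp
  finally show ?thesis
    unfolding hermitian_def using A cW assms(2) hA by (simp add: assoc_mult_mat[of _ m n _ n _ m])
qed

definition real_diag_mat :: "nat \<Rightarrow> (nat \<Rightarrow> real) \<Rightarrow> complex mat" where
  "real_diag_mat n f = mat n n (\<lambda>(i,j). if i = j then complex_of_real (f i) else 0)"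

lemma real_diag_mat_carrier [simp]: "real_diag_mat n f \<in> carrier_mat n n"
  by (simp add: real_diag_mat_def)

lemma real_diag_mat_dims [simp]: "dim_row (real_diag_mat n f) = n" "dim_col (real_diag_mat n f) = n"
  by (simp_all add: real_diag_mat_def)

lemma cadjoint_real_diag_mat: "cadjoint (real_diag_mat n f) = real_diag_mat n f"
  by (rule eq_matI) (auto simp: real_diag_mat_def)

lemma real_diag_mat_one: "real_diag_mat n (\<lambda>_. 1) = 1\<^sub>m n"
  by (rule eq_matI) (auto simp: real_diag_mat_def)

lemma sum_delta_mult:
  fixes c :: complex and i n :: nat
  assumes "i < n"
  shows "(\<Sum>k\<in>{0..<n}. (if i = k then c else 0) * h k) = c * h i"
  using assms by (simp add: if_distrib[of "\<lambda>x. x * _"] cong: if_cong)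

lemma real_diag_mat_mult_vec:
  assumes "v \<in> carrier_vec n" "i < n"
  shows "(real_diag_mat n f *\<^sub>v v) $ i = complex_of_real (f i) * v $ i"
  using assms sum_delta_mult[of i n _ "\<lambda>k. v $ k"] by (simp add: real_diag_mat_def scalar_prod_def)

lemma real_diag_mat_mult: "real_diag_mat n f * real_diag_mat n g = real_diag_mat n (\<lambda>i. f i * g i)"
proof (rule eq_matI)
  fix i j assume "i < dim_row (real_diag_mat n (\<lambda>i. f i * g i))" "j < dim_col (real_diag_mat n (\<lambda>i. f i * g i))"
  then have i: "i < n" and j: "j < n" by auto
  have "(real_diag_mat n f * real_diag_mat n g) $$ (i,j) =
      (\<Sum>k\<in>{0..<n}. (if i = k then complex_of_real (f i) else 0) * real_diag_mat n g $$ (k,j))"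
    using i j by (simp add: real_diag_mat_def scalar_prod_def)
  also have "\<dots> = complex_of_real (f i) * real_diag_mat n g $$ (i,j)" by (rule sum_delta_mult[OF i])
  finally show "(real_diag_mat n f * real_diag_mat n g) $$ (i,j) = real_diag_mat n (\<lambda>i. f i * g i) $$ (i,j)"
    using i j by (simp add: real_diag_mat_def)
qed auto

lemma ctrace_mult_real_diag_mat:
  assumes "M \<in> carrier_mat n n"
  shows "ctrace (M * real_diag_mat n f) = (\<Sum>k<n. M $$ (k,k) * complex_of_real (f k))"
  unfolding ctrace_def
proof (rule sum.cong)
  fix k assume "k \<in> {..<n}"
  then have k: "k < n" by simp
  have "(M * real_diag_mat n f) $$ (k,k) =
      (\<Sum>l\<in>{0..<n}. (if k = l then complex_of_real (f k) else 0) * M $$ (k,l))"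
    using assms k by (auto simp: scalar_prod_def real_diag_mat_def mult.commute intro!: sum.cong)
  then show "(M * real_diag_mat n f) $$ (k,k) = M $$ (k,k) * complex_of_real (f k)"
    using sum_delta_mult[OF k] by (simp add: mult.commute)
qed (use assms in simp)

lemma cinner_real_diag_mat:
  assumes "y \<in> carrier_vec n"
  shows "cinner y (real_diag_mat n f *\<^sub>v y) = complex_of_real (\<Sum>i<n. f i * (cmod (y $ i))\<^sup>2)"
proof -
  have "cinner y (real_diag_mat n f *\<^sub>v y) = (\<Sum>i<n. complex_of_real (f i * (cmod (y $ i))\<^sup>2))"
    unfolding cinner_def
  proof (rule sum.cong)
    fix i assume "i \<in> {..<n}"
    then have "(real_diag_mat n f *\<^sub>v y) $ i = complex_of_real (f i) * y $ i"
      using real_diag_mat_mult_vec[OF assms] by simp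
    moreover have "cnj (y $ i) * y $ i = complex_of_real ((cmod (y $ i))\<^sup>2)"
      by (metis complex_norm_square mult.commute)
    ultimately show "cnj (y $ i) * (real_diag_mat n f *\<^sub>v y) $ i = complex_of_real (f i * (cmod (y $ i))\<^sup>2)"
      by (simp add: mult.left_commute)
  qed simp
  then show ?thesis by simp
qed

lemma real_diag_mat_Suc:
  "real_diag_mat (Suc m) f = four_block_mat (mat 1 1 (\<lambda>_. complex_of_real (f 0))) (0\<^sub>m 1 m) (0\<^sub>m m 1)
     (real_diag_mat m (\<lambda>i. f (Suc i)))" (is "_ = ?B")
proof (rule eq_matI)
  fix i j assume "i < dim_row ?B" "j < dim_col ?B"
  then show "real_diag_mat (Suc m) f $$ (i,j) = ?B $$ (i,j)"
    by (cases i; cases j) (auto simp: real_diag_mat_def)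
qed (auto simp: real_diag_mat_def)

section \<open>Unitary matrices and the spectral theorem\<close>

definition unitary :: "nat \<Rightarrow> complex mat \<Rightarrow> bool" where
  "unitary n U \<longleftrightarrow> U \<in> carrier_mat n n \<and> cadjoint U * U = 1\<^sub>m n \<and> U * cadjoint U = 1\<^sub>m n"

lemma unitaryD:
  assumes "unitary n U"
  shows "U \<in> carrier_mat n n" "cadjoint U \<in> carrier_mat n n"
    "cadjoint U * U = 1\<^sub>m n" "U * cadjoint U = 1\<^sub>m n"
  using assms cadjoint_carrier[of U n n] by (auto simp: unitary_def)

lemma unitary_cinner_col:
  assumes "unitary n U" "i < n" "j < n"
  shows "cinner (col U i) (col U j) = (if i = j then 1 else 0)"
  using cadjoint_mult_index[of U n n U n i j] unitaryD[OF assms(1)] assms(2,3) by simp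

lemma unitary_mult:
  assumes "unitary n U" "unitary n V"
  shows "unitary n (U * V)"
proof -
  note U = unitaryD[OF assms(1)] and V = unitaryD[OF assms(2)]
  have adj: "cadjoint (U * V) = cadjoint V * cadjoint U" using cadjoint_mult[OF U(1) V(1)] .
  have "cadjoint (U * V) * (U * V) = cadjoint V * (cadjoint U * U) * V"
    unfolding adj using U(1,2) V(1,2) by (simp add: assoc_mult_mat[of _ n n _ n _ n])
  also have "\<dots> = 1\<^sub>m n" by (simp only: U(3) right_mult_one_mat[OF V(2)] V(3))
  finally have UV: "cadjoint (U * V) * (U * V) = 1\<^sub>m n" .
  have "U * V * cadjoint (U * V) = U * (V * cadjoint V) * cadjoint U"
    unfolding adj using U(1,2) V(1,2) by (simp add: assoc_mult_mat[of _ n n _ n _ n])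
  also have "\<dots> = 1\<^sub>m n" by (simp only: V(4) right_mult_one_mat[OF U(1)] U(4))
  finally show ?thesis using UV U V by (simp add: unitary_def)
qed

definition normalize_cvec :: "complex vec \<Rightarrow> complex vec" where
  "normalize_cvec w = complex_of_real (1 / sqrt (Re (cinner w w))) \<cdot>\<^sub>v w"

lemma normalize_cvec_carrier: "w \<in> carrier_vec n \<Longrightarrow> normalize_cvec w \<in> carrier_vec n"
  by (simp add: normalize_cvec_def)

lemma cinner_normalize_cvec:
  "dim_vec w = dim_vec w' \<Longrightarrow> cinner (normalize_cvec w) (normalize_cvec w') =
     complex_of_real (1 / sqrt (Re (cinner w w)) * (1 / sqrt (Re (cinner w' w')))) * cinner w w'"
  by (simp add: normalize_cvec_def cinner_smult_left cinner_smult_right)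

lemma cinner_normalize_cvec_self:
  assumes "w \<noteq> 0\<^sub>v (dim_vec w)"
  shows "cinner (normalize_cvec w) (normalize_cvec w) = 1"
proof -
  define r where "r = Re (cinner w w)"
  have w: "cinner w w = complex_of_real r" using cinner_self_eq_Re[of w] by (simp add: r_def)
  have "r \<noteq> 0" using assms w cinner_self_eq_0_iff[of w] by auto
  then have "r > 0" using cinner_self_real(2)[of w] by (simp add: r_def)
  then have "1 / sqrt r * (1 / sqrt r) * r = 1" by (simp add: field_simps)
  then show ?thesis using cinner_normalize_cvec[of w w] by (simp add: w r_def[symmetric])
qed

lemma normalize_cvec_unit: "cinner w w = 1 \<Longrightarrow> normalize_cvec w = w"
  by (simp add: normalize_cvec_def)

lemma unit_eigenvector_exists:
  assumes A: "A \<in> carrier_mat n n" and n: "n > 0"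
  shows "\<exists>e u. u \<in> carrier_vec n \<and> cinner u u = 1 \<and> A *\<^sub>v u = e \<cdot>\<^sub>v u"
proof -
  from spectrum_non_empty[OF A n] obtain e where "eigenvalue A e" by (auto simp: spectrum_def)
  then have "eigenvector A (find_eigenvector A e) e" by (rule find_eigenvector[OF A])
  then obtain v where v: "v \<in> carrier_vec n" "v \<noteq> 0\<^sub>v n" "A *\<^sub>v v = e \<cdot>\<^sub>v v"
    using A unfolding eigenvector_def by auto
  define u where "u = normalize_cvec v"
  have "u \<in> carrier_vec n" using v(1) by (simp add: u_def normalize_cvec_carrier)
  moreover have "cinner u u = 1"
    unfolding u_def using v(1,2) by (intro cinner_normalize_cvec_self) auto
  moreover have "A *\<^sub>v u = e \<cdot>\<^sub>v u"
    unfolding u_def normalize_cvec_def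
    using mult_mat_vec[OF A v(1)] v(3) by (simp add: smult_smult_assoc mult.commute)
  ultimately show ?thesis by blast
qed

text \<open>Gram--Schmidt applied to a basis completion of a unit vector u yields an orthonormal
  basis starting with u.\<close>

lemma unitary_with_first_col:
  assumes u: "u \<in> carrier_vec n" and uu: "cinner u u = 1"
  shows "\<exists>W. unitary n W \<and> col W 0 = u"
proof -
  interpret cof_vec_space n "TYPE(complex)" .
  have u0: "u \<noteq> 0\<^sub>v n" using uu by (auto simp: cinner_def)
  have n0: "n \<noteq> 0" using u u0 by (auto intro: eq_vecI)
  define b where "b = basis_completion u"
  note bc = basis_completion[OF u u0, folded b_def]
  from bc(6,7) n0 obtain vs where bv: "b = u # vs" by (cases b) auto
  define gs where "gs = gram_schmidt n b"
  have gs: "corthogonal gs" "set gs \<subseteq> carrier_vec n" "length gs = n"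
    using gram_schmidt_result[OF bc(2) bc(4) bc(5) gs_def] bc(6) by auto
  have g0: "gs ! 0 = u"
    using gram_schmidt_hd[OF u, of vs] gs(3) n0 unfolding gs_def bv by (cases "gram_schmidt n (u # vs)") auto
  have gin: "\<And>i. i < n \<Longrightarrow> gs ! i \<in> carrier_vec n" using gs by auto
  have orth: "cinner (gs ! i) (gs ! j) = 0 \<longleftrightarrow> i \<noteq> j" if "i < n" "j < n" for i j
    using corthogonalD[OF gs(1)] cinner_eq_scalar_prod_c[OF gin gin] that gs(3) by auto
  define ws where "ws = map normalize_cvec gs"
  have ws: "length ws = n" "set ws \<subseteq> carrier_vec n"
    using gs by (auto simp: ws_def intro: normalize_cvec_carrier)
  have on: "cinner (ws ! i) (ws ! j) = (if i = j then 1 else 0)" if i: "i < n" and j: "j < n" for i j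
  proof (cases "i = j")
    case True
    have "gs ! i \<noteq> 0\<^sub>v (dim_vec (gs ! i))" using orth[OF i i] cinner_self_eq_0_iff by auto
    then show ?thesis using True i gs(3) cinner_normalize_cvec_self by (simp add: ws_def)
  next
    case False
    then show ?thesis
      using cinner_normalize_cvec[of "gs ! i" "gs ! j"] gin[OF i] gin[OF j] orth[OF i j] i j gs(3)
      by (simp add: ws_def)
  qed
  define W where "W = mat_of_cols n ws"
  have W: "W \<in> carrier_mat n n" using mat_of_cols_carrier(1)[of n ws] ws by (simp add: W_def)
  have colW: "col W i = ws ! i" if "i < n" for i
    unfolding W_def using ws that by (intro col_mat_of_cols) auto
  have WW: "cadjoint W * W = 1\<^sub>m n"
  proof (rule eq_matI)
    fix i j assume "i < dim_row (1\<^sub>m n)" "j < dim_col (1\<^sub>m n)"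
    then show "(cadjoint W * W) $$ (i,j) = 1\<^sub>m n $$ (i,j)"
      using cadjoint_mult_index[OF W W] colW on by simp
  qed (use W in auto)
  have "W * cadjoint W = 1\<^sub>m n"
    using mat_mult_left_right_inverse[OF cadjoint_carrier[OF W] W WW] .
  moreover have "col W 0 = u" using colW[of 0] n0 g0 normalize_cvec_unit[OF uu] gs(3) by (simp add: ws_def)
  ultimately show ?thesis using W WW unfolding unitary_def by blast
qed

lemma unitary_conj_eigenvector_col:
  assumes W: "unitary n W" and A: "A \<in> carrier_mat n n"
    and eig: "A *\<^sub>v col W 0 = e \<cdot>\<^sub>v col W 0" and i: "i < n"
  shows "(cadjoint W * A * W) $$ (i,0) = (if i = 0 then e else 0)"
proof -
  note W' = unitaryD[OF W]
  have AW: "A * W \<in> carrier_mat n n" using A W' by simp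
  have "(cadjoint W * A * W) $$ (i,0) = (cadjoint W * (A * W)) $$ (i,0)"
    using A W' by (simp add: assoc_mult_mat[of _ n n _ n _ n])
  also have "\<dots> = cinner (col W i) (col (A * W) 0)"
    by (rule cadjoint_mult_index[OF W'(1) AW i]) (use i in simp)
  also have "col (A * W) 0 = A *\<^sub>v col W 0"
    by (rule col_mult2[OF A W'(1)]) (use i in simp)
  also have "cinner (col W i) (A *\<^sub>v col W 0) = e * cinner (col W i) (col W 0)"
    by (simp add: eig cinner_smult_right)
  finally show ?thesis using unitary_cinner_col[OF W i] i by simp
qed

lemma hermitian_deflate:
  assumes A: "hermitian (Suc m) A" and col0: "\<And>i. i < Suc m \<Longrightarrow> A $$ (i,0) = (if i = 0 then e else 0)"
  shows "\<exists>r A3. hermitian m A3 \<and>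
    A = four_block_mat (mat 1 1 (\<lambda>_. complex_of_real r)) (0\<^sub>m 1 m) (0\<^sub>m m 1) A3"
proof -
  have Ac: "A \<in> carrier_mat (Suc m) (Suc m)" and hA: "cadjoint A = A"
    using A by (auto simp: hermitian_def)
  have sym: "A $$ (i,j) = cnj (A $$ (j,i))" if "i < Suc m" "j < Suc m" for i j
    using cadjoint_index[of i A j] Ac hA that by simp
  have "e = cnj e" using sym[of 0 0] col0[of 0] by simp
  then obtain r where e: "e = complex_of_real r" by (metis Reals_cnj_iff Reals_cases)
  define A3 where "A3 = mat m m (\<lambda>(i,j). A $$ (Suc i, Suc j))"
  have "cadjoint A3 = A3"
  proof (rule eq_matI)
    fix i j assume "i < dim_row A3" "j < dim_col A3"
    then have "i < m" "j < m" by (auto simp: A3_def)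
    then show "cadjoint A3 $$ (i,j) = A3 $$ (i,j)"
      using sym[of "Suc i" "Suc j"] by (simp add: A3_def)
  qed (auto simp: A3_def)
  then have "hermitian m A3" by (simp add: hermitian_def A3_def)
  moreover have "A = four_block_mat (mat 1 1 (\<lambda>_. complex_of_real r)) (0\<^sub>m 1 m) (0\<^sub>m m 1) A3"
    (is "A = ?B")
  proof (rule eq_matI)
    fix i j assume "i < dim_row ?B" "j < dim_col ?B"
    then have i: "i < Suc m" and j: "j < Suc m" by (auto simp: A3_def)
    show "A $$ (i,j) = ?B $$ (i,j)"
    proof (cases "i = 0 \<or> j = 0")
      case True
      then show ?thesis using i j col0 sym[OF i j] col0[OF j] e by (auto simp: A3_def)
    next
      case False
      then show ?thesis using i j by (cases i; cases j) (auto simp: A3_def)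
    qed
  qed (use Ac in \<open>auto simp: A3_def\<close>)
  ultimately show ?thesis by blast
qed

lemma four_block_diag_mult:
  assumes "A1 \<in> carrier_mat a a" "A2 \<in> carrier_mat a a" "D1 \<in> carrier_mat d d" "D2 \<in> carrier_mat d d"
  shows "four_block_mat A1 (0\<^sub>m a d) (0\<^sub>m d a) D1 * four_block_mat A2 (0\<^sub>m a d) (0\<^sub>m d a) D2
       = four_block_mat (A1 * A2) (0\<^sub>m a d) (0\<^sub>m d a) (D1 * D2)"
  by (subst mult_four_block_mat[OF assms(1) zero_carrier_mat zero_carrier_mat assms(3)
        assms(2) zero_carrier_mat zero_carrier_mat assms(4)])
     (use assms in \<open>simp add: right_mult_zero_mat left_mult_zero_mat\<close>)

lemma cadjoint_four_block_diag:
  assumes "A \<in> carrier_mat a a" "D \<in> carrier_mat d d"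
  shows "cadjoint (four_block_mat A (0\<^sub>m a d) (0\<^sub>m d a) D) =
    four_block_mat (cadjoint A) (0\<^sub>m a d) (0\<^sub>m d a) (cadjoint D)"
  using assms by (intro eq_matI) auto

lemma unitary_four_block_diag:
  assumes "unitary m U"
  shows "unitary (Suc m) (four_block_mat (1\<^sub>m 1) (0\<^sub>m 1 m) (0\<^sub>m m 1) U)"
proof -
  note U = unitaryD[OF assms]
  have "four_block_mat (1\<^sub>m 1) (0\<^sub>m 1 m) (0\<^sub>m m 1) U \<in> carrier_mat (Suc m) (Suc m)"
    using four_block_carrier_mat[OF one_carrier_mat[of 1] U(1), of "0\<^sub>m 1 m" "0\<^sub>m m 1"] by simp
  then show ?thesis
    unfolding unitary_def cadjoint_four_block_diag[OF one_carrier_mat U(1)]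
    by (simp add: four_block_diag_mult[OF one_carrier_mat one_carrier_mat] U)
qed

text \<open>Induction on the dimension: a unit eigenvector is the first column of a unitary W, and
  conjugating A by W splits off a real 1 x 1 block from a Hermitian block of smaller size.\<close>

theorem hermitian_unitary_diagonalization:
  assumes "hermitian n A"
  shows "\<exists>U \<mu>. unitary n U \<and> cadjoint U * A * U = real_diag_mat n \<mu>"
  using assms
proof (induction n arbitrary: A)
  case 0
  have "unitary 0 (1\<^sub>m 0)" by (simp add: unitary_def)
  moreover have "cadjoint (1\<^sub>m 0) * A * 1\<^sub>m 0 = real_diag_mat 0 \<mu>" for \<mu>
    using "0" by (auto simp: hermitian_def real_diag_mat_def)
  ultimately show ?case by blast
next
  case (Suc m)
  have A: "A \<in> carrier_mat (Suc m) (Suc m)" using Suc.prems by (simp add: hermitian_def)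
  obtain e u where u: "u \<in> carrier_vec (Suc m)" "cinner u u = 1" and eu: "A *\<^sub>v u = e \<cdot>\<^sub>v u"
    using unit_eigenvector_exists[OF A] by auto
  obtain W where W: "unitary (Suc m) W" and W0: "col W 0 = u"
    using unitary_with_first_col[OF u] by blast
  note W' = unitaryD[OF W]
  obtain r A3 where A3: "hermitian m A3"
    and A': "cadjoint W * A * W = four_block_mat (mat 1 1 (\<lambda>_. complex_of_real r)) (0\<^sub>m 1 m) (0\<^sub>m m 1) A3"
    using hermitian_deflate[OF hermitian_cadjoint_conj[OF Suc.prems W'(1)]]
      unitary_conj_eigenvector_col[OF W A] eu W0 by blast
  obtain U3 \<mu>3 where U3: "unitary m U3" and D3: "cadjoint U3 * A3 * U3 = real_diag_mat m \<mu>3"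
    using Suc.IH[OF A3] by blast
  note U3' = unitaryD[OF U3]
  have A3c: "A3 \<in> carrier_mat m m" using A3 by (simp add: hermitian_def)
  define F where "F = four_block_mat (1\<^sub>m 1) (0\<^sub>m 1 m) (0\<^sub>m m 1) U3"
  have F: "unitary (Suc m) F" unfolding F_def by (rule unitary_four_block_diag[OF U3])
  note F' = unitaryD[OF F]
  have "cadjoint (W * F) * A * (W * F) = cadjoint F * (cadjoint W * A * W) * F"
    using cadjoint_mult[OF W'(1) F'(1)] A W' F' by (simp add: assoc_mult_mat[of _ "Suc m" "Suc m" _ "Suc m" _ "Suc m"])
  also have "\<dots> = four_block_mat (mat 1 1 (\<lambda>_. complex_of_real r)) (0\<^sub>m 1 m) (0\<^sub>m m 1) (cadjoint U3 * A3 * U3)"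
    unfolding A' F_def cadjoint_four_block_diag[OF one_carrier_mat U3'(1)] cadjoint_one
    by (subst four_block_diag_mult[OF one_carrier_mat _ U3'(2) A3c], simp,
        subst four_block_diag_mult[OF _ one_carrier_mat _ U3'(1)]) (use A3c U3' in simp_all)
  also have "\<dots> = real_diag_mat (Suc m) (case_nat r \<mu>3)"
    unfolding D3 real_diag_mat_Suc by simp
  finally show ?case using unitary_mult[OF W F] by blast
qed

corollary hermitian_spectral_decomposition:
  assumes "hermitian n A"
  shows "\<exists>U \<mu>. unitary n U \<and> A = U * real_diag_mat n \<mu> * cadjoint U"
proof -
  obtain U \<mu> where U: "unitary n U" and D: "cadjoint U * A * U = real_diag_mat n \<mu>"
    using hermitian_unitary_diagonalization[OF assms] by blast
  note U' = unitaryD[OF U]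
  have A: "A \<in> carrier_mat n n" using assms by (simp add: hermitian_def)
  have "U * real_diag_mat n \<mu> * cadjoint U = (U * cadjoint U) * A * (U * cadjoint U)"
    unfolding D[symmetric] using A U'(1,2) by (simp add: assoc_mult_mat[of _ n n _ n _ n])
  also have "\<dots> = A" by (simp only: U'(4) left_mult_one_mat[OF A] right_mult_one_mat[OF A])
  finally show ?thesis using U by auto
qed

lemma cinner_unitary_conj_real_diag_mat:
  assumes U: "U \<in> carrier_mat n n" and v: "v \<in> carrier_vec n"
  shows "cinner v ((U * real_diag_mat n f * cadjoint U) *\<^sub>v v) =
     complex_of_real (\<Sum>i<n. f i * (cmod ((cadjoint U *\<^sub>v v) $ i))\<^sup>2)"
proof -
  have cU: "cadjoint U \<in> carrier_mat n n" using cadjoint_carrier[OF U] .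
  have "(U * real_diag_mat n f * cadjoint U) *\<^sub>v v = U *\<^sub>v (real_diag_mat n f *\<^sub>v (cadjoint U *\<^sub>v v))"
    using U cU v by (simp add: assoc_mult_mat_vec[of _ n n _ n])
  then have "cinner v ((U * real_diag_mat n f * cadjoint U) *\<^sub>v v) =
      cinner (cadjoint U *\<^sub>v v) (real_diag_mat n f *\<^sub>v (cadjoint U *\<^sub>v v))"
    using cinner_mult_mat_vec[OF U v mult_mat_vec_carrier[OF real_diag_mat_carrier], of "cadjoint U *\<^sub>v v"]
      cU v by simp
  then show ?thesis using cinner_real_diag_mat cU v by simp
qed

lemma unitary_cinner_self:
  assumes U: "unitary n U" and v: "v \<in> carrier_vec n"
  shows "Re (cinner v v) = (\<Sum>i<n. (cmod ((cadjoint U *\<^sub>v v) $ i))\<^sup>2)"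
  using cinner_unitary_conj_real_diag_mat[OF unitaryD(1)[OF U] v, of "\<lambda>_. 1"] unitaryD[OF U] v
  by (simp add: real_diag_mat_one)

lemma unitary_conj_real_diag_mat_nonneg:
  assumes U: "unitary n U"
    and psd: "\<And>v. v \<in> carrier_vec n \<Longrightarrow> 0 \<le> Re (cinner v ((U * real_diag_mat n \<mu> * cadjoint U) *\<^sub>v v))"
    and i: "i < n"
  shows "0 \<le> \<mu> i"
proof -
  note U' = unitaryD[OF U]
  have "cadjoint U *\<^sub>v col U i = col (cadjoint U * U) i"
    using col_mult2[OF U'(2) U'(1) i] by simp
  then have coords: "cadjoint U *\<^sub>v col U i = unit_vec n i" using U'(3) i by simp
  have "(\<Sum>k<n. \<mu> k * (cmod (unit_vec n i $ k))\<^sup>2) = \<mu> i"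
    using i by (simp add: if_distrib[of "\<lambda>x. _ * (cmod x)\<^sup>2"] cong: if_cong)
  moreover have "col U i \<in> carrier_vec n" using U'(1) by (metis carrier_matD(1) col_dim)
  ultimately show ?thesis
    using psd[of "col U i"] cinner_unitary_conj_real_diag_mat[OF U'(1), of "col U i" \<mu>] coords
    by simp
qed

section \<open>Density operators as mixtures of pure states\<close>

lemma density_op_mixture:
  assumes "density_op n \<rho>"
  obtains V p where "unitary n V" "\<And>k. k < n \<Longrightarrow> 0 \<le> p k" "(\<Sum>k<n. p k) = 1"
    "\<And>X. X \<in> carrier_mat n n \<Longrightarrow>
       Re (ctrace (X * \<rho>)) = (\<Sum>k<n. p k * Re (cinner (col V k) (X *\<^sub>v col V k)))"
proof -
  have R: "\<rho> \<in> carrier_mat n n" "hermitian n \<rho>" and tr: "ctrace \<rho> = 1"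
    and psd: "\<And>v. v \<in> carrier_vec n \<Longrightarrow> 0 \<le> Re (cinner v (\<rho> *\<^sub>v v))"
    using assms by (auto simp: density_op_def psd_def hermitian_def)
  obtain V p where V: "unitary n V" and RV: "\<rho> = V * real_diag_mat n p * cadjoint V"
    using hermitian_spectral_decomposition[OF R(2)] by blast
  note V' = unitaryD[OF V]
  have p: "0 \<le> p k" if "k < n" for k
    using unitary_conj_real_diag_mat_nonneg[OF V _ that] psd RV by simp
  have trace: "Re (ctrace (X * \<rho>)) = (\<Sum>k<n. p k * Re (cinner (col V k) (X *\<^sub>v col V k)))"
    if X: "X \<in> carrier_mat n n" for X
  proof -
    have XV: "X * V \<in> carrier_mat n n" using X V' by simp
    have "ctrace (X * \<rho>) = ctrace ((X * V * real_diag_mat n p) * cadjoint V)"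
      unfolding RV using X V' by (simp add: assoc_mult_mat[of _ n n _ n _ n])
    also have "\<dots> = ctrace (cadjoint V * (X * V) * real_diag_mat n p)"
      by (subst ctrace_mult_commute[of _ n n]) (use X V' in \<open>simp_all add: assoc_mult_mat[of _ n n _ n _ n]\<close>)
    also have "\<dots> = (\<Sum>k<n. (cadjoint V * (X * V)) $$ (k,k) * complex_of_real (p k))"
      using XV V' by (intro ctrace_mult_real_diag_mat) simp
    also have "\<dots> = (\<Sum>k<n. cinner (col V k) (X *\<^sub>v col V k) * complex_of_real (p k))"
      using cadjoint_mult_index[OF V'(1) XV] col_mult2[OF X V'(1)] by simp
    finally show ?thesis by (simp add: Re_sum mult.commute)
  qed
  have "(\<Sum>k<n. p k) = 1"
    using trace[of "1\<^sub>m n"] unitary_cinner_col[OF V] R(1) tr col_dim V'(1) by simp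
  with that V p trace show ?thesis by blast
qed

lemma trace_ge_of_pure_states:
  assumes \<rho>: "density_op n \<rho>" and P: "P \<in> carrier_mat n n" and Q: "Q \<in> carrier_mat n n"
    and pure: "\<And>\<phi>. \<phi> \<in> carrier_vec n \<Longrightarrow> cinner \<phi> \<phi> = 1 \<Longrightarrow>
       \<alpha> + \<beta> * Re (cinner \<phi> (Q *\<^sub>v \<phi>)) \<le> Re (cinner \<phi> (P *\<^sub>v \<phi>))"
  shows "\<alpha> + \<beta> * Re (ctrace (Q * \<rho>)) \<le> Re (ctrace (P * \<rho>))"
proof -
  obtain V p where V: "unitary n V" and p: "\<And>k. k < n \<Longrightarrow> 0 \<le> p k" "(\<Sum>k<n. p k) = 1"
    and tr: "\<And>X. X \<in> carrier_mat n n \<Longrightarrow>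
       Re (ctrace (X * \<rho>)) = (\<Sum>k<n. p k * Re (cinner (col V k) (X *\<^sub>v col V k)))"
    using density_op_mixture[OF \<rho>] by metis
  have col: "col V k \<in> carrier_vec n" "cinner (col V k) (col V k) = 1" if "k < n" for k
    using unitary_cinner_col[OF V that that] unitaryD(1)[OF V] by auto
  have "\<alpha> + \<beta> * Re (ctrace (Q * \<rho>)) =
      \<alpha> * (\<Sum>k<n. p k) + \<beta> * (\<Sum>k<n. p k * Re (cinner (col V k) (Q *\<^sub>v col V k)))"
    using tr[OF Q] p(2) by simp
  also have "\<dots> = (\<Sum>k<n. p k * (\<alpha> + \<beta> * Re (cinner (col V k) (Q *\<^sub>v col V k))))"
    by (simp add: algebra_simps sum.distrib sum_distrib_left)
  also have "\<dots> \<le> (\<Sum>k<n. p k * Re (cinner (col V k) (P *\<^sub>v col V k)))"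
    using pure[OF col] p(1) by (intro sum_mono mult_left_mono) auto
  also have "\<dots> = Re (ctrace (P * \<rho>))" using tr[OF P] by simp
  finally show ?thesis .
qed

lemma projection_hermitian: "projection n P \<Longrightarrow> hermitian n P"
  by (simp add: projection_def hermitian_def)

lemma projection_cinner_self:
  assumes P: "projection n P" and v: "v \<in> carrier_vec n"
  shows "cinner (P *\<^sub>v v) (P *\<^sub>v v) = cinner v (P *\<^sub>v v)"
proof -
  have Pc: "P \<in> carrier_mat n n" and PP: "P * P = P" using P by (auto simp: projection_def)
  have "cinner (P *\<^sub>v v) (P *\<^sub>v v) = cinner v (P *\<^sub>v (P *\<^sub>v v))"
    using cinner_hermitian[OF projection_hermitian[OF P] v, of "P *\<^sub>v v"] Pc v by simp
  also have "P *\<^sub>v (P *\<^sub>v v) = P *\<^sub>v v"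
    using assoc_mult_mat_vec[OF Pc Pc v] PP by simp
  finally show ?thesis .
qed

lemma projection_quadratic_nonneg:
  "projection n P \<Longrightarrow> v \<in> carrier_vec n \<Longrightarrow> 0 \<le> Re (cinner v (P *\<^sub>v v))"
  using projection_cinner_self cinner_self_real(2) by metis

lemma projection_complement_cinner_self:
  assumes P: "projection n P" and v: "v \<in> carrier_vec n"
  shows "Re (cinner (v - P *\<^sub>v v) (v - P *\<^sub>v v)) = Re (cinner v v) - Re (cinner v (P *\<^sub>v v))"
proof -
  have Pv: "P *\<^sub>v v \<in> carrier_vec n" using P v by (auto simp: projection_def)
  have "cinner (v - P *\<^sub>v v) (v - P *\<^sub>v v) =
      cinner v v - cinner v (P *\<^sub>v v) - (cinner (P *\<^sub>v v) v - cinner (P *\<^sub>v v) (P *\<^sub>v v))"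
    using carrier_vecD[OF Pv] carrier_vecD[OF v] by (simp add: cinner_minus_left cinner_minus_right)
  also have "cinner (P *\<^sub>v v) v = cnj (cinner v (P *\<^sub>v v))"
    using cinner_commute Pv v by (metis carrier_vecD)
  finally show ?thesis using projection_cinner_self[OF P v] by simp
qed

lemma smult_mat_mult_vec: "A \<in> carrier_mat nr nc \<Longrightarrow> v \<in> carrier_vec nc \<Longrightarrow> (k \<cdot>\<^sub>m A) *\<^sub>v v = k \<cdot>\<^sub>v (A *\<^sub>v v)"
  by (intro eq_vecI) (auto simp: scalar_prod_def sum_distrib_left mult.assoc)

lemma loewner_le_smult_realI:
  assumes A: "hermitian n A" and P: "hermitian n P"
    and le: "\<And>v. v \<in> carrier_vec n \<Longrightarrow> Re (cinner v (P *\<^sub>v v)) \<le> c * Re (cinner v (A *\<^sub>v v))"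
  shows "loewner_le n P (complex_of_real c \<cdot>\<^sub>m A)"
proof -
  have Ac: "A \<in> carrier_mat n n" and Pc: "P \<in> carrier_mat n n" and cA: "complex_of_real c \<cdot>\<^sub>m A \<in> carrier_mat n n"
    using A P by (auto simp: hermitian_def)
  have "cadjoint (complex_of_real c \<cdot>\<^sub>m A - P) = complex_of_real c \<cdot>\<^sub>m A - P"
    using cadjoint_minus[OF cA Pc] cadjoint_smult_real[of c A] A P by (simp add: hermitian_def)
  moreover have "0 \<le> Re (cinner v ((complex_of_real c \<cdot>\<^sub>m A - P) *\<^sub>v v))" if v: "v \<in> carrier_vec n" for v
  proof -
    have "(complex_of_real c \<cdot>\<^sub>m A - P) *\<^sub>v v = complex_of_real c \<cdot>\<^sub>v (A *\<^sub>v v) - P *\<^sub>v v"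
      using minus_mult_distrib_mat_vec[OF cA Pc v] smult_mat_mult_vec[OF Ac v] by simp
    then have "cinner v ((complex_of_real c \<cdot>\<^sub>m A - P) *\<^sub>v v) =
        complex_of_real c * cinner v (A *\<^sub>v v) - cinner v (P *\<^sub>v v)"
      using Ac Pc v by (simp add: cinner_minus_right cinner_smult_right)
    then show ?thesis using le[OF v] by simp
  qed
  ultimately show ?thesis unfolding loewner_le_def psd_def using cA Pc by auto
qed

lemma loewner_le_zero_smult:
  assumes "hermitian n A" "\<And>v. v \<in> carrier_vec n \<Longrightarrow> 0 \<le> Re (cinner v (A *\<^sub>v v))" "0 \<le> c"
  shows "loewner_le n (0\<^sub>m n n) (complex_of_real c \<cdot>\<^sub>m A)"
  using assms by (intro loewner_le_smult_realI) (auto simp: hermitian_def cinner_def)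

lemma loewner_le_smult_ge_one:
  assumes A: "hermitian n A" and P: "hermitian n P"
    and A0: "\<And>v. v \<in> carrier_vec n \<Longrightarrow> 0 \<le> Re (cinner v (A *\<^sub>v v))"
    and PA: "\<And>v. v \<in> carrier_vec n \<Longrightarrow> Re (cinner v (P *\<^sub>v v)) \<le> Re (cinner v (A *\<^sub>v v))"
    and c: "1 \<le> c"
  shows "loewner_le n P (complex_of_real c \<cdot>\<^sub>m A)"
proof (rule loewner_le_smult_realI[OF A P])
  fix v :: "complex vec" assume v: "v \<in> carrier_vec n"
  have "Re (cinner v (P *\<^sub>v v)) \<le> Re (cinner v (A *\<^sub>v v))" by (rule PA[OF v])
  also have "\<dots> \<le> c * Re (cinner v (A *\<^sub>v v))" using A0[OF v] c by (simp add: mult_le_cancel_right1)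
  finally show "Re (cinner v (P *\<^sub>v v)) \<le> c * Re (cinner v (A *\<^sub>v v))" .
qed

lemma msum_carrier: "msum n F I \<in> carrier_mat n n"
  by (simp add: msum_def)

lemma msum_mult_vec:
  assumes "finite I" "\<And>k. k \<in> I \<Longrightarrow> F k \<in> carrier_mat n n" "v \<in> carrier_vec n" "i < n"
  shows "(msum n F I *\<^sub>v v) $ i = (\<Sum>k\<in>I. (F k *\<^sub>v v) $ i)"
proof -
  have "(msum n F I *\<^sub>v v) $ i = (\<Sum>j\<in>{0..<n}. (\<Sum>k\<in>I. F k $$ (i,j)) * v $ j)"
    using assms by (simp add: msum_def scalar_prod_def)
  also have "\<dots> = (\<Sum>k\<in>I. \<Sum>j\<in>{0..<n}. F k $$ (i,j) * v $ j)"
    by (simp add: sum_distrib_right) (rule sum.swap)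
  also have "\<dots> = (\<Sum>k\<in>I. (F k *\<^sub>v v) $ i)"
  proof (rule sum.cong)
    fix k assume "k \<in> I"
    then show "(\<Sum>j\<in>{0..<n}. F k $$ (i,j) * v $ j) = (F k *\<^sub>v v) $ i"
      using assms(2)[of k] assms(3,4) by (auto simp: scalar_prod_def)
  qed simp
  finally show ?thesis .
qed

lemma cinner_msum:
  assumes "finite I" "\<And>k. k \<in> I \<Longrightarrow> F k \<in> carrier_mat n n" "v \<in> carrier_vec n"
  shows "cinner v (msum n F I *\<^sub>v v) = (\<Sum>k\<in>I. cinner v (F k *\<^sub>v v))"
proof -
  have "cinner v (msum n F I *\<^sub>v v) = (\<Sum>i<n. \<Sum>k\<in>I. cnj (v $ i) * (F k *\<^sub>v v) $ i)"
    unfolding cinner_def using msum_mult_vec[OF assms]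
    by (intro sum.cong) (simp_all add: msum_def sum_distrib_left)
  also have "\<dots> = (\<Sum>k\<in>I. cinner v (F k *\<^sub>v v))"
    unfolding cinner_def using assms by (subst sum.swap) (intro sum.cong, auto)
  finally show ?thesis .
qed

lemma hermitian_msum:
  assumes "\<And>k. k \<in> I \<Longrightarrow> hermitian n (F k)"
  shows "hermitian n (msum n F I)"
proof -
  have "cadjoint (msum n F I) = msum n F I"
  proof (rule eq_matI)
    fix i j assume "i < dim_row (msum n F I)" "j < dim_col (msum n F I)"
    then have i: "i < n" and j: "j < n" by (auto simp: msum_def)
    have herm: "cnj (F k $$ (j,i)) = F k $$ (i,j)" if "k \<in> I" for k
      using assms[OF that] cadjoint_index[of i "F k" j] i j by (auto simp: hermitian_def)
    have "cadjoint (msum n F I) $$ (i,j) = (\<Sum>k\<in>I. cnj (F k $$ (j,i)))"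
      using i j by (simp add: msum_def cnj_sum)
    also have "\<dots> = msum n F I $$ (i,j)"
      using i j herm by (simp add: msum_def)
    finally show "cadjoint (msum n F I) $$ (i,j) = msum n F I $$ (i,j)" .
  qed (auto simp: msum_def)
  then show ?thesis by (simp add: hermitian_def msum_carrier)
qed

lemma msum_projections:
  assumes I: "finite I" and proj: "\<And>k. k \<in> I \<Longrightarrow> projection n (F k)"
  shows "hermitian n (msum n F I)"
    and "v \<in> carrier_vec n \<Longrightarrow> 0 \<le> Re (cinner v (msum n F I *\<^sub>v v))"
    and "k \<in> I \<Longrightarrow> v \<in> carrier_vec n \<Longrightarrow> Re (cinner v (F k *\<^sub>v v)) \<le> Re (cinner v (msum n F I *\<^sub>v v))"
proof -
  have Fc: "\<And>k. k \<in> I \<Longrightarrow> F k \<in> carrier_mat n n" using proj by (simp add: projection_def)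
  show "hermitian n (msum n F I)" using hermitian_msum projection_hermitian proj by metis
  assume v: "v \<in> carrier_vec n"
  have sum: "Re (cinner v (msum n F I *\<^sub>v v)) = (\<Sum>k\<in>I. Re (cinner v (F k *\<^sub>v v)))"
    using cinner_msum[OF I Fc v] by (simp add: Re_sum)
  show "0 \<le> Re (cinner v (msum n F I *\<^sub>v v))"
    unfolding sum using projection_quadratic_nonneg[OF proj v] by (simp add: sum_nonneg)
  show "Re (cinner v (F k *\<^sub>v v)) \<le> Re (cinner v (msum n F I *\<^sub>v v))" if "k \<in> I"
    unfolding sum using projection_quadratic_nonneg[OF proj v] that I by (intro member_le_sum) auto
qed

section \<open>The spectral cutoff of a sum of projections\<close>

lemma cinner_weighted_cauchy_schwarz:
  assumes d: "dim_vec p = dim_vec q" and k: "0 < k"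
  shows "2 * Re (cinner p q) \<le> k * Re (cinner p p) + Re (cinner q q) / k"
proof -
  have real_ineq: "2 * (a * c + b * e) \<le> k * (a * a + b * b) + (c * c + e * e) / k" for a b c e :: real
  proof -
    have "0 \<le> ((k * a - c)\<^sup>2 + (k * b - e)\<^sup>2) / k" using k by simp
    also have "\<dots> = k * (a * a + b * b) + (c * c + e * e) / k - 2 * (a * c + b * e)"
      using k by (simp add: field_simps power2_eq_square)
    finally show ?thesis by simp
  qed
  have Re: "Re (cinner u w) = (\<Sum>i<dim_vec w. Re (u $ i) * Re (w $ i) + Im (u $ i) * Im (w $ i))" for u w
    by (simp add: cinner_def Re_sum)
  have "2 * Re (cinner p q) \<le> (\<Sum>i<dim_vec q. k * (Re (p $ i) * Re (p $ i) + Im (p $ i) * Im (p $ i)) +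
       (Re (q $ i) * Re (q $ i) + Im (q $ i) * Im (q $ i)) / k)"
    unfolding Re sum_distrib_left by (intro sum_mono real_ineq)
  also have "\<dots> = k * Re (cinner p p) + Re (cinner q q) / k"
    unfolding Re[of p p] Re[of q q] d
    by (subst sum.distrib, subst sum_distrib_left, subst sum_divide_distrib) (rule refl)
  finally show ?thesis .
qed

lemma cmod_add_square_le:
  assumes a: "0 < a"
  shows "(cmod (u + w))\<^sup>2 \<le> (1 + a) * (cmod u)\<^sup>2 + (1 + 1 / a) * (cmod w)\<^sup>2"
proof -
  have "0 \<le> (a * cmod u - cmod w)\<^sup>2 / a" using a by simp
  also have "\<dots> = a * (cmod u)\<^sup>2 + (cmod w)\<^sup>2 / a - 2 * cmod u * cmod w"
    using a by (simp add: field_simps power2_eq_square)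
  finally have "(cmod u + cmod w)\<^sup>2 \<le> (1 + a) * (cmod u)\<^sup>2 + (1 + 1 / a) * (cmod w)\<^sup>2"
    by (simp add: power2_sum algebra_simps)
  moreover have "(cmod (u + w))\<^sup>2 \<le> (cmod u + cmod w)\<^sup>2"
    by (simp add: norm_triangle_ineq power_mono)
  ultimately show ?thesis by linarith
qed

definition spectral_cutoff :: "nat \<Rightarrow> complex mat \<Rightarrow> (nat \<Rightarrow> real) \<Rightarrow> real \<Rightarrow> complex mat" where
  "spectral_cutoff n U \<mu> t = U * real_diag_mat n (\<lambda>i. of_bool (t \<le> \<mu> i)) * cadjoint U"

lemma projection_spectral_cutoff:
  assumes U: "unitary n U"
  shows "projection n (spectral_cutoff n U \<mu> t)"
proof -
  note U' = unitaryD[OF U]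
  define G where "G = real_diag_mat n (\<lambda>i. of_bool (t \<le> \<mu> i))"
  have G: "G \<in> carrier_mat n n" "hermitian n G" "G * G = G"
    by (auto simp: G_def hermitian_def cadjoint_real_diag_mat real_diag_mat_mult simp flip: of_bool_conj)
  have "U * G * cadjoint U * (U * G * cadjoint U) = U * G * (cadjoint U * U) * G * cadjoint U"
    using U'(1,2) G(1) by (simp add: assoc_mult_mat[of _ n n _ n _ n])
  also have "\<dots> = U * G * cadjoint U"
    using U'(1,2,3) G(1,3) by (simp add: assoc_mult_mat[of _ n n _ n _ n])
  moreover have "hermitian n (U * G * cadjoint U)"
    using hermitian_cadjoint_conj[OF G(2) U'(2)] by simp
  ultimately show ?thesis unfolding projection_def spectral_cutoff_def G_def[symmetric] hermitian_def
    by simp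
qed

lemma spectral_cutoff_le:
  assumes U: "unitary n U" and \<mu>: "\<And>i. i < n \<Longrightarrow> 0 \<le> \<mu> i" and t: "0 < t" and v: "v \<in> carrier_vec n"
  shows "Re (cinner v (spectral_cutoff n U \<mu> t *\<^sub>v v)) \<le>
    (1 / t) * Re (cinner v ((U * real_diag_mat n \<mu> * cadjoint U) *\<^sub>v v))"
proof -
  define w where "w i = (cmod ((cadjoint U *\<^sub>v v) $ i))\<^sup>2" for i
  have Re_eq: "Re (cinner v ((U * real_diag_mat n f * cadjoint U) *\<^sub>v v)) = (\<Sum>i<n. f i * w i)" for f
    unfolding w_def cinner_unitary_conj_real_diag_mat[OF unitaryD(1)[OF U] v] by simp
  have "(\<Sum>i<n. of_bool (t \<le> \<mu> i) * w i) \<le> (\<Sum>i<n. 1 / t * (\<mu> i * w i))"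
    using \<mu> t by (intro sum_mono) (auto simp: w_def field_simps intro: mult_right_mono)
  then show ?thesis
    unfolding spectral_cutoff_def Re_eq sum_distrib_left .
qed

text \<open>Let z be the component of Q \<phi> along the eigenvectors of A
  with eigenvalue below t, and Z its squared norm. Then Z = Re \<langle>Q z, \<phi>\<rangle>, while the squared norm of Q z is at most
  \<langle>z, A z\<rangle> \<le> t Z, so the weighted Cauchy--Schwarz inequality gives 2 Z \<le> Z + t.\<close>

lemma low_spectral_weight_le:
  assumes U: "unitary n U" and Q: "projection n Q"
    and QA: "\<And>v. v \<in> carrier_vec n \<Longrightarrow>
       Re (cinner v (Q *\<^sub>v v)) \<le> Re (cinner v ((U * real_diag_mat n \<mu> * cadjoint U) *\<^sub>v v))"
    and t: "0 < t" and \<phi>: "\<phi> \<in> carrier_vec n" "cinner \<phi> \<phi> = 1"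
  shows "(\<Sum>i<n. of_bool (\<mu> i < t) * (cmod ((cadjoint U *\<^sub>v (Q *\<^sub>v \<phi>)) $ i))\<^sup>2) \<le> t"
proof -
  note U' = unitaryD[OF U]
  have Qc: "Q \<in> carrier_mat n n" using Q by (simp add: projection_def)
  define h where "h i = (of_bool (\<mu> i < t) :: real)" for i
  define y where "y w = cadjoint U *\<^sub>v w" for w
  define av where "av = Q *\<^sub>v \<phi>"
  define Z where "Z = (\<Sum>i<n. h i * (cmod (y av $ i))\<^sup>2)"
  define z where "z = (U * real_diag_mat n h * cadjoint U) *\<^sub>v av"
  have av: "av \<in> carrier_vec n" using Qc \<phi> by (simp add: av_def)
  have "U * real_diag_mat n h * cadjoint U \<in> carrier_mat n n"
    by (meson U'(1,2) mult_carrier_mat real_diag_mat_carrier)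
  then have z: "z \<in> carrier_vec n" using av by (simp add: z_def)
  have yav: "y av \<in> carrier_vec n" using U' av by (simp add: y_def)
  have Dyav: "real_diag_mat n h *\<^sub>v y av \<in> carrier_vec n"
    using mult_mat_vec_carrier[OF real_diag_mat_carrier yav] .
  have "y z = cadjoint U *\<^sub>v (U *\<^sub>v (real_diag_mat n h *\<^sub>v y av))"
    using U'(1,2) av yav by (simp add: y_def z_def assoc_mult_mat_vec[of _ n n _ n])
  also have "\<dots> = (cadjoint U * U) *\<^sub>v (real_diag_mat n h *\<^sub>v y av)"
    by (rule assoc_mult_mat_vec[symmetric, OF U'(2) U'(1) Dyav])
  finally have yz: "y z $ i = complex_of_real (h i) * y av $ i" if "i < n" for i
    using U'(3) Dyav real_diag_mat_mult_vec[OF yav that] by simp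
  have "Re (cinner (Q *\<^sub>v z) (Q *\<^sub>v z)) = Re (cinner z (Q *\<^sub>v z))"
    using projection_cinner_self[OF Q z] by simp
  also have "\<dots> \<le> Re (cinner z ((U * real_diag_mat n \<mu> * cadjoint U) *\<^sub>v z))" by (rule QA[OF z])
  also have "\<dots> = (\<Sum>i<n. \<mu> i * (cmod (y z $ i))\<^sup>2)"
    using cinner_unitary_conj_real_diag_mat[OF U'(1) z] by (simp add: y_def)
  also have "\<dots> \<le> (\<Sum>i<n. t * (h i * (cmod (y av $ i))\<^sup>2))"
    using yz by (intro sum_mono) (auto simp: h_def norm_mult intro: mult_right_mono)
  finally have norm_Qz: "Re (cinner (Q *\<^sub>v z) (Q *\<^sub>v z)) \<le> t * Z"
    by (simp add: Z_def sum_distrib_left)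
  have "cinner av z = complex_of_real Z"
    unfolding z_def Z_def y_def by (rule cinner_unitary_conj_real_diag_mat[OF U'(1) av])
  then have "Re (cinner z av) = Z" using cinner_commute[of av z] av z by simp
  moreover have "cinner z av = cinner (Q *\<^sub>v z) \<phi>"
    unfolding av_def using cinner_hermitian[OF projection_hermitian[OF Q] z \<phi>(1)] by simp
  ultimately have "2 * Z = 2 * Re (cinner (Q *\<^sub>v z) \<phi>)" by simp
  also have "\<dots> \<le> 1 / t * Re (cinner (Q *\<^sub>v z) (Q *\<^sub>v z)) + Re (cinner \<phi> \<phi>) / (1 / t)"
    using Qc z \<phi>(1) t by (intro cinner_weighted_cauchy_schwarz) auto
  also have "\<dots> \<le> Z + t"
    using norm_Qz \<phi>(2) t by (simp add: field_simps)
  finally show ?thesis by (simp add: Z_def h_def y_def av_def)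
qed

text \<open>Split \<phi> = Q \<phi> + (\<phi> - Q \<phi>): the low-eigenvalue part of the first summand is small by
  the previous lemma, and the second summand is short when \<phi> is almost in the range of Q.\<close>

lemma spectral_cutoff_expectation_ge:
  assumes U: "unitary n U" and Q: "projection n Q"
    and QA: "\<And>v. v \<in> carrier_vec n \<Longrightarrow>
       Re (cinner v (Q *\<^sub>v v)) \<le> Re (cinner v ((U * real_diag_mat n \<mu> * cadjoint U) *\<^sub>v v))"
    and t: "0 < t" and a: "0 < a" and \<phi>: "\<phi> \<in> carrier_vec n" "cinner \<phi> \<phi> = 1"
  shows "1 - (1 + a) * t - (1 + 1 / a) * (1 - Re (cinner \<phi> (Q *\<^sub>v \<phi>)))
    \<le> Re (cinner \<phi> (spectral_cutoff n U \<mu> t *\<^sub>v \<phi>))"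
proof -
  note U' = unitaryD[OF U]
  have Qc: "Q \<in> carrier_mat n n" using Q by (simp add: projection_def)
  define h where "h i = (of_bool (\<mu> i < t) :: real)" for i
  define y where "y w = cadjoint U *\<^sub>v w" for w
  define low where "low w = (\<Sum>i<n. h i * (cmod (y w $ i))\<^sup>2)" for w
  define av where "av = Q *\<^sub>v \<phi>"
  define bv where "bv = \<phi> - av"
  have av: "av \<in> carrier_vec n" and bv: "bv \<in> carrier_vec n"
    using Qc \<phi> by (auto simp: av_def bv_def)
  have norm: "Re (cinner w w) = (\<Sum>i<n. (cmod (y w $ i))\<^sup>2)" if "w \<in> carrier_vec n" for w
    unfolding y_def by (rule unitary_cinner_self[OF U that])
  have "Re (cinner \<phi> (spectral_cutoff n U \<mu> t *\<^sub>v \<phi>)) = (\<Sum>i<n. (1 - h i) * (cmod (y \<phi> $ i))\<^sup>2)"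
    using cinner_unitary_conj_real_diag_mat[OF U'(1) \<phi>(1)]
    by (simp add: spectral_cutoff_def h_def y_def not_less[symmetric] of_bool_not_iff)
  also have "\<dots> = 1 - low \<phi>"
    using norm[OF \<phi>(1)] \<phi>(2) by (simp add: low_def left_diff_distrib sum_subtractf)
  finally have cutoff: "Re (cinner \<phi> (spectral_cutoff n U \<mu> t *\<^sub>v \<phi>)) = 1 - low \<phi>" .
  have "\<phi> = av + bv" using av \<phi>(1) by (intro eq_vecI) (auto simp: bv_def)
  then have "y \<phi> = y av + y bv"
    using mult_add_distrib_mat_vec[OF U'(2) av bv] by (simp add: y_def)
  then have "low \<phi> \<le> (\<Sum>i<n. h i * ((1 + a) * (cmod (y av $ i))\<^sup>2 + (1 + 1 / a) * (cmod (y bv $ i))\<^sup>2))"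
    unfolding low_def using U' av
    by (intro sum_mono mult_left_mono) (auto simp: h_def y_def intro: cmod_add_square_le[OF a])
  also have "\<dots> = (1 + a) * low av + (1 + 1 / a) * low bv"
    by (simp add: low_def sum.distrib sum_distrib_left algebra_simps)
  finally have split: "low \<phi> \<le> (1 + a) * low av + (1 + 1 / a) * low bv" .
  have "low av \<le> t"
    using low_spectral_weight_le[OF U Q QA t \<phi>] by (simp add: low_def h_def y_def av_def)
  moreover have "low bv \<le> 1 - Re (cinner \<phi> (Q *\<^sub>v \<phi>))"
  proof -
    have "low bv \<le> (\<Sum>i<n. (cmod (y bv $ i))\<^sup>2)"
      unfolding low_def by (intro sum_mono) (simp add: h_def)
    also have "\<dots> = 1 - Re (cinner \<phi> (Q *\<^sub>v \<phi>))"
      using norm[OF bv] projection_complement_cinner_self[OF Q \<phi>(1)] \<phi>(2)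
      by (simp add: bv_def av_def)
    finally show ?thesis .
  qed
  ultimately have "(1 + a) * low av + (1 + 1 / a) * low bv \<le> (1 + a) * t + (1 + 1 / a) * (1 - Re (cinner \<phi> (Q *\<^sub>v \<phi>)))"
    using a by (intro add_mono mult_left_mono) auto
  then show ?thesis using cutoff split by linarith
qed

lemma sum_of_projections_cutoff:
  assumes I: "finite I" and \<rho>: "\<And>i. i \<in> I \<Longrightarrow> density_op n (\<rho> i)"
    and proj: "\<And>i. i \<in> I \<Longrightarrow> projection n (Proj i)" and t: "0 < t" and a: "0 < a"
  obtains P where "projection n P" "loewner_le n P (complex_of_real (1 / t) \<cdot>\<^sub>m msum n Proj I)"
    "\<And>i. i \<in> I \<Longrightarrow> 1 - (1 + a) * t - (1 + 1 / a) * (1 - Re (ctrace (Proj i * \<rho> i)))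
       \<le> Re (ctrace (P * \<rho> i))"
proof -
  have A: "hermitian n (msum n Proj I)"
    "\<And>v. v \<in> carrier_vec n \<Longrightarrow> 0 \<le> Re (cinner v (msum n Proj I *\<^sub>v v))"
    "\<And>k v. k \<in> I \<Longrightarrow> v \<in> carrier_vec n \<Longrightarrow>
       Re (cinner v (Proj k *\<^sub>v v)) \<le> Re (cinner v (msum n Proj I *\<^sub>v v))"
    using msum_projections[of I n Proj] I proj by auto
  obtain U \<mu> where U: "unitary n U" and AU: "msum n Proj I = U * real_diag_mat n \<mu> * cadjoint U"
    using hermitian_spectral_decomposition[OF A(1)] by blast
  have \<mu>: "0 \<le> \<mu> i" if "i < n" for i
    using unitary_conj_real_diag_mat_nonneg[OF U _ that] A(2) AU by simp
  define P where "P = spectral_cutoff n U \<mu> t"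
  have P: "projection n P" unfolding P_def by (rule projection_spectral_cutoff[OF U])
  have "loewner_le n P (complex_of_real (1 / t) \<cdot>\<^sub>m msum n Proj I)"
  proof (rule loewner_le_smult_realI[OF A(1) projection_hermitian[OF P]])
    fix v :: "complex vec" assume v: "v \<in> carrier_vec n"
    show "Re (cinner v (P *\<^sub>v v)) \<le> 1 / t * Re (cinner v (msum n Proj I *\<^sub>v v))"
      unfolding P_def AU by (rule spectral_cutoff_le[OF U _ t v]) (rule \<mu>)
  qed
  moreover have "1 - (1 + a) * t - (1 + 1 / a) * (1 - Re (ctrace (Proj i * \<rho> i))) \<le> Re (ctrace (P * \<rho> i))"
    if i: "i \<in> I" for i
  proof -
    have "(1 - (1 + a) * t - (1 + 1 / a)) + (1 + 1 / a) * Re (cinner \<phi> (Proj i *\<^sub>v \<phi>))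
        \<le> Re (cinner \<phi> (P *\<^sub>v \<phi>))" if "\<phi> \<in> carrier_vec n" "cinner \<phi> \<phi> = 1" for \<phi>
      using spectral_cutoff_expectation_ge[OF U proj[OF i] _ t a that] A(3)[OF i] AU
      by (simp add: P_def algebra_simps)
    from trace_ge_of_pure_states[OF \<rho>[OF i] _ _ this] P proj[OF i]
    show ?thesis by (simp add: projection_def algebra_simps)
  qed
  ultimately show ?thesis using that P by blast
qed

lemma cutoff_error_le:
  fixes \<delta> \<epsilon> L x :: real
  assumes \<delta>: "0 < \<delta>" and \<epsilon>: "0 \<le> \<epsilon>" and small: "\<epsilon> + \<delta> * L < 1" and L: "2 \<le> L"
    and x: "1 - \<epsilon> \<le> x"
  shows "1 - \<epsilon> - \<delta> * L \<le> 1 - (1 + 1 / \<delta>) * (1 / (2 / \<delta>\<^sup>2) powr L) - (1 + \<delta>) * (1 - x)"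
proof -
  have "\<delta> * 2 \<le> \<delta> * L" using L \<delta> by simp
  then have \<delta>1: "2 * \<delta> < 1" and \<epsilon>1: "\<epsilon> < 1" using small \<epsilon> \<delta> by linarith+
  define b where "b = 2 / \<delta>\<^sup>2"
  have "\<delta>\<^sup>2 \<le> 1" using \<delta> \<delta>1 by (simp add: power_le_one)
  then have b1: "1 \<le> b" using \<delta> by (simp add: b_def field_simps)
  have "b\<^sup>2 \<le> b powr L"
    using powr_mono[OF L b1] b1 by (simp add: powr_realpow)
  then have "1 / b powr L \<le> 1 / b\<^sup>2" using b1 by (simp add: frac_le)
  also have "1 / b\<^sup>2 = \<delta>^4 / 4" by (simp add: b_def power_divide field_simps flip: power_mult)
  finally have "(1 + 1 / \<delta>) * (1 / b powr L) \<le> (1 + 1 / \<delta>) * (\<delta>^4 / 4)"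
    using \<delta> by (intro mult_left_mono) auto
  also have "\<dots> = (\<delta> ^ 3 + \<delta> ^ 4) / 4" using \<delta> by (simp add: field_simps power_eq_if)
  also have "\<dots> \<le> \<delta>"
    using power_decreasing[of 1 3 \<delta>] power_decreasing[of 1 4 \<delta>] \<delta> \<delta>1 by simp
  finally have "(1 + 1 / \<delta>) * (1 / b powr L) \<le> \<delta>" .
  moreover have "(1 + \<delta>) * (1 - x) \<le> (1 + \<delta>) * \<epsilon>" using x \<delta> by (intro mult_left_mono) auto
  moreover have "\<delta> * \<epsilon> \<le> \<delta>" using \<delta> \<epsilon>1 by simp
  ultimately show ?thesis using \<open>\<delta> * 2 \<le> \<delta> * L\<close> by (simp add: b_def algebra_simps)
qed

lemma projection_dominated_by_msum_exists:
  assumes I: "finite I" and \<rho>: "\<And>i. i \<in> I \<Longrightarrow> density_op n (\<rho> i)"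
    and proj: "\<And>i. i \<in> I \<Longrightarrow> projection n (Proj i)"
    and captured: "\<And>i. i \<in> I \<Longrightarrow> 1 - \<epsilon> \<le> Re (ctrace (Proj i * \<rho> i))"
    and \<epsilon>: "0 \<le> \<epsilon>" and \<delta>: "0 < \<delta>" and small: "\<epsilon> + \<delta> * L < 1" and L: "2 \<le> L"
  shows "\<exists>P. projection n P \<and> (\<forall>i\<in>I. 1 - \<epsilon> - \<delta> * L \<le> Re (ctrace (P * \<rho> i))) \<and>
    loewner_le n P (complex_of_real ((2 / \<delta>\<^sup>2) powr L) \<cdot>\<^sub>m msum n Proj I)"
proof -
  define c where "c = (2 / \<delta>\<^sup>2) powr L"
  have c: "0 < c" using \<delta> by (simp add: c_def)
  obtain P where P: "projection n P" "loewner_le n P (complex_of_real (1 / (1 / c)) \<cdot>\<^sub>m msum n Proj I)"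
    and tr: "\<And>i. i \<in> I \<Longrightarrow> 1 - (1 + 1 / \<delta>) * (1 / c) - (1 + 1 / (1 / \<delta>)) *
      (1 - Re (ctrace (Proj i * \<rho> i))) \<le> Re (ctrace (P * \<rho> i))"
    using sum_of_projections_cutoff[where I=I and \<rho>=\<rho> and Proj=Proj and t="1 / c" and a="1 / \<delta>",
        OF I \<rho> proj] c \<delta> by auto
  have "1 - \<epsilon> - \<delta> * L \<le> Re (ctrace (P * \<rho> i))" if "i \<in> I" for i
    using cutoff_error_le[OF \<delta> \<epsilon> small L captured[OF that]] tr[OF that] by (simp add: c_def)
  then show ?thesis using P by (auto simp: c_def)
qed

theorem lemma3:
  fixes n s :: nat and \<epsilon> \<delta> :: real
    and \<rho> Proj :: "nat \<Rightarrow> complex mat"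
  assumes "\<epsilon> > 0" and "\<delta> > 0" and "s \<ge> 1"
    and "\<And>i. i \<in> {1..s} \<Longrightarrow> density_op n (\<rho> i)"
    and "\<And>i. i \<in> {1..s} \<Longrightarrow> projection n (Proj i)"
    and "\<And>i. i \<in> {1..s} \<Longrightarrow> Re (ctrace (Proj i * \<rho> i)) \<ge> 1 - \<epsilon>"
  shows "\<exists>P. projection n P \<and>
    (\<forall>i \<in> {1..s}. Re (ctrace (P * \<rho> i)) \<ge> 1 - \<epsilon> - \<delta> * log 2 (2 * real s)) \<and>
    loewner_le n P ((2 / \<delta>\<^sup>2) powr (log 2 (2 * real s)) \<cdot>\<^sub>m
       msum n Proj {1..s})"
proof -
  note \<epsilon> = assms(1) and \<delta> = assms(2) and \<rho> = assms(4) and proj = assms(5) and captured = assms(6)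
  define L where "L = log 2 (2 * real s)"
  define c where "c = (2 / \<delta>\<^sup>2) powr L"
  have A: "hermitian n (msum n Proj {1..s})"
    "\<And>v. v \<in> carrier_vec n \<Longrightarrow> 0 \<le> Re (cinner v (msum n Proj {1..s} *\<^sub>v v))"
    "\<And>k v. k \<in> {1..s} \<Longrightarrow> v \<in> carrier_vec n \<Longrightarrow>
       Re (cinner v (Proj k *\<^sub>v v)) \<le> Re (cinner v (msum n Proj {1..s} *\<^sub>v v))"
    using msum_projections[of "{1..s}" n Proj] proj by auto
  consider (vacuous) "1 \<le> \<epsilon> + \<delta> * L" | (single) "s = 1" "\<epsilon> + \<delta> * L < 1"
    | (several) "2 \<le> s" "\<epsilon> + \<delta> * L < 1"
    using assms(3) by linarith
  then have "\<exists>P. projection n P \<and> (\<forall>i\<in>{1..s}. 1 - \<epsilon> - \<delta> * L \<le> Re (ctrace (P * \<rho> i))) \<and>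
    loewner_le n P (complex_of_real c \<cdot>\<^sub>m msum n Proj {1..s})"
  proof cases
    case vacuous
    have "ctrace (0\<^sub>m n n * \<rho> i) = 0" if "i \<in> {1..s}" for i
      using \<rho>[OF that] by (auto simp: density_op_def psd_def ctrace_def)
    then show ?thesis using vacuous loewner_le_zero_smult[OF A(1,2), of c]
      by (intro exI[of _ "0\<^sub>m n n"]) (auto simp: projection_def c_def)
  next
    case single
    then have "L = 1" and "\<delta>\<^sup>2 \<le> 1" using \<epsilon> \<delta> by (auto simp: L_def power_le_one)
    then have "1 \<le> c" using \<delta> by (simp add: c_def field_simps)
    then show ?thesis
      using loewner_le_smult_ge_one[OF A(1) projection_hermitian[OF proj] A(2) A(3)] single captured[of 1] \<delta>
      by (intro exI[of _ "Proj 1"]) (auto simp: \<open>L = 1\<close> proj)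
  next
    case several
    have "2 \<le> L" using several by (simp add: L_def le_log_iff)
    then show ?thesis
      using projection_dominated_by_msum_exists[where I="{1..s}" and \<rho>=\<rho> and Proj=Proj,
          OF _ \<rho> proj captured _ \<delta> several(2)] \<epsilon>
      by (simp add: c_def)
  qed
  then show ?thesis by (simp add: L_def c_def)
qed

end
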